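(* Let $G$ be a group with identity $e$, $A$ a finite set with $|A|\ge2$, $S\subseteq G$ finite with $e\in S$ and $|S|\ge2$. Suppose $(\mathcal P,f)$ generates a local map $\mu:A^S\to A$ and $|\mathcal P|$ is not a multiple of $|A|$. Then $\mathrm{mms}(\mu)=S$.
   Context: $A^S$ is the set of functions $S\to A$. A local map $\mu:A^S\to A$ defines the cellular automaton $\tau:A^G\to A^G$, $\tau(x)(g)=\mu((g^{-1}\cdot x)|_S)$, where $(g\cdot x)(h)=x(g^{-1}h)$. A finite $T\subseteq G$ is a memory set of $\tau$ if some local map $A^T\to A$ defines $\tau$; $\mathrm{mms}(\mu)$ is the intersection of all memory sets of the cellular automaton defined by $\mu$. The pair $(\mathcal P,f)$ generates $\mu$ if $\mathcal P=\{z\in A^S:\mu(z)\neq z(e)\}$ and $f:\mathcal P\to A$ is the restriction of $\mu$ to $\mathcal P$. *)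

theory Defs
  imports Main
begin

text \<open>The group G is a type of class group_add (written additively; not assumed
commutative): identity 0, product g + h, inverse - g.
A pattern z \<in> A^S is represented as a function 'g \<Rightarrow> 'a that is undefined
(the fixed value undefined) outside S.\<close>

definition patterns :: "'g set \<Rightarrow> ('g \<Rightarrow> 'a) set" where
  "patterns S = {z. \<forall>g. g \<notin> S \<longrightarrow> z g = undefined}"

definition restr :: "'g set \<Rightarrow> ('g \<Rightarrow> 'a) \<Rightarrow> ('g \<Rightarrow> 'a)" where
  "restr S x = (\<lambda>g. if g \<in> S then x g else undefined)"

definition shift :: "'g::group_add \<Rightarrow> ('g \<Rightarrow> 'a) \<Rightarrow> ('g \<Rightarrow> 'a)" where
  "shift g x = (\<lambda>h. x (- g + h))"

definition ca :: "'g::group_add set \<Rightarrow> (('g \<Rightarrow> 'a) \<Rightarrow> 'a) \<Rightarrow> ('g \<Rightarrow> 'a) \<Rightarrow> ('g \<Rightarrow> 'a)" where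
  "ca S mu x = (\<lambda>g. mu (restr S (shift (- g) x)))"

definition memory_set :: "(('g::group_add \<Rightarrow> 'a) \<Rightarrow> ('g \<Rightarrow> 'a)) \<Rightarrow> 'g set \<Rightarrow> bool" where
  "memory_set tau T \<longleftrightarrow> finite T \<and> (\<exists>nu. tau = ca T nu)"

definition mms :: "'g::group_add set \<Rightarrow> (('g \<Rightarrow> 'a) \<Rightarrow> 'a) \<Rightarrow> 'g set" where
  "mms S mu = \<Inter> {T. memory_set (ca S mu) T}"

definition generates :: "'g::group_add set \<Rightarrow> ('g \<Rightarrow> 'a) set \<Rightarrow> (('g \<Rightarrow> 'a) \<Rightarrow> 'a)
    \<Rightarrow> (('g \<Rightarrow> 'a) \<Rightarrow> 'a) \<Rightarrow> bool" where
  "generates S P f mu \<longleftrightarrow> P = {z \<in> patterns S. mu z \<noteq> z 0} \<and> (\<forall>z\<in>P. f z = mu z)"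

end

theory Submission
  imports Defs "HOL-Library.FuncSet"
begin

text \<open>If some s \<in> S is missing from a memory set, the local map mu does not depend on the
coordinate s. For s \<noteq> 0 the set of active patterns {z. mu z \<noteq> z 0} is then closed under
changing z at s, so it splits into fibres of size |A|. For s = 0 the inactive patterns
{z. mu z = z 0} correspond bijectively to the patterns on S - {0}, so there are
|A|^(|S|-1) of them and |A|^|S| - |A|^(|S|-1) active ones, again a multiple of |A|
because |S| \<ge> 2. Either way |A| divides the number of active patterns.\<close>

definition active_patterns :: "'g::zero set \<Rightarrow> (('g \<Rightarrow> 'a) \<Rightarrow> 'a) \<Rightarrow> ('g \<Rightarrow> 'a) set" where
  "active_patterns S mu = {z \<in> patterns S. mu z \<noteq> z 0}"

lemma generates_imp_eq_active_patterns: "generates S P f mu \<Longrightarrow> P = active_patterns S mu"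
  by (simp add: generates_def active_patterns_def)

lemma patterns_eq_PiE: "patterns S = S \<rightarrow>\<^sub>E UNIV"
  by (auto simp: patterns_def PiE_def extensional_def)

lemma finite_patterns: "finite S \<Longrightarrow> finite (patterns S :: ('g \<Rightarrow> 'a::finite) set)"
  by (simp add: patterns_eq_PiE finite_PiE)

lemma card_patterns:
  "finite S \<Longrightarrow> card (patterns S :: ('g \<Rightarrow> 'a::finite) set) = card (UNIV :: 'a set) ^ card S"
  by (simp add: patterns_eq_PiE card_PiE)

lemma patterns_mono: "S \<subseteq> T \<Longrightarrow> patterns S \<subseteq> patterns T"
  by (auto simp: patterns_def)

lemma fun_upd_in_patterns: "z \<in> patterns S \<Longrightarrow> s \<in> S \<Longrightarrow> z(s := a) \<in> patterns S"
  by (auto simp: patterns_def)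

lemma restr_patterns: "z \<in> patterns S \<Longrightarrow> restr S z = z"
  by (auto simp: restr_def patterns_def)

lemma ca_eq_imp_local_map_eq:
  assumes "ca S mu = ca T nu"
  shows "mu (restr S x) = nu (restr T x)"
proof -
  have "ca S mu x 0 = ca T nu x 0"
    using assms by simp
  then show ?thesis
    by (simp add: ca_def shift_def)
qed

lemma memory_set_local_map_fun_upd:
  assumes "memory_set (ca S mu) T" and "s \<in> S" and "s \<notin> T" and "z \<in> patterns S"
  shows "mu (z(s := a)) = mu z"
proof -
  obtain nu where eq: "ca S mu = ca T nu"
    using assms(1) by (auto simp: memory_set_def)
  have "restr T (z(s := a)) = restr T z"
    using assms(3) by (auto simp: restr_def)
  then show ?thesis
    using ca_eq_imp_local_map_eq[OF eq, of z] ca_eq_imp_local_map_eq[OF eq, of "z(s := a)"]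
    by (simp add: restr_patterns assms(4) fun_upd_in_patterns assms(2))
qed

lemma card_fun_upd_closed:
  fixes Q :: "('b \<Rightarrow> 'a::finite) set"
  assumes closed: "\<And>z a. z \<in> Q \<Longrightarrow> z(s := a) \<in> Q"
  shows "card Q = card ((\<lambda>z. z(s := undefined)) ` Q) * card (UNIV :: 'a set)"
proof -
  let ?I = "(\<lambda>z. z(s := undefined)) ` Q"
  have "bij_betw (\<lambda>z. (z(s := undefined), z s)) Q (?I \<times> UNIV)"
    by (rule bij_betw_byWitness[where f' = "\<lambda>(w, a). w(s := a)"]) (auto intro: closed)
  then have "card Q = card (?I \<times> (UNIV :: 'a set))"
    by (rule bij_betw_same_card)
  then show ?thesis
    by (simp add: card_cartesian_product)
qed

lemma card_inactive_patterns:
  fixes mu :: "('g \<Rightarrow> 'a) \<Rightarrow> 'a"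
  assumes "s \<in> S" and ignores: "\<And>z a. z \<in> patterns S \<Longrightarrow> mu (z(s := a)) = mu z"
  shows "card {z \<in> patterns S. mu z = z s} = card (patterns (S - {s}) :: ('g \<Rightarrow> 'a) set)"
proof -
  have sub: "patterns (S - {s}) \<subseteq> patterns S"
    by (rule patterns_mono) blast
  have "bij_betw (\<lambda>z. z(s := undefined)) {z \<in> patterns S. mu z = z s} (patterns (S - {s}))"
  proof (rule bij_betw_byWitness[where f' = "\<lambda>w. w(s := mu w)"])
    show "\<forall>z \<in> {z \<in> patterns S. mu z = z s}. (z(s := undefined))(s := mu (z(s := undefined))) = z"
      using ignores by auto
    show "\<forall>w \<in> patterns (S - {s}). (w(s := mu w))(s := undefined) = w"
      by (auto simp: patterns_def)
    show "(\<lambda>z. z(s := undefined)) ` {z \<in> patterns S. mu z = z s} \<subseteq> patterns (S - {s})"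
      by (auto simp: patterns_def)
    show "(\<lambda>w. w(s := mu w)) ` patterns (S - {s}) \<subseteq> {z \<in> patterns S. mu z = z s}"
      using sub ignores \<open>s \<in> S\<close> by (auto intro: fun_upd_in_patterns)
  qed
  then show ?thesis
    by (rule bij_betw_same_card)
qed

lemma card_UNIV_dvd_card_active_patterns_nonzero:
  fixes mu :: "('g::zero \<Rightarrow> 'a::finite) \<Rightarrow> 'a"
  assumes "finite S" and "s \<in> S" and "s \<noteq> 0"
    and ignores: "\<And>z a. z \<in> patterns S \<Longrightarrow> mu (z(s := a)) = mu z"
  shows "card (UNIV :: 'a set) dvd card (active_patterns S mu)"
proof -
  have "card (active_patterns S mu)
      = card ((\<lambda>z. z(s := undefined)) ` active_patterns S mu) * card (UNIV :: 'a set)"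
    by (rule card_fun_upd_closed)
      (use assms in \<open>auto simp: active_patterns_def intro: fun_upd_in_patterns\<close>)
  then show ?thesis
    by simp
qed

lemma card_UNIV_dvd_card_active_patterns_zero:
  fixes mu :: "('g::zero \<Rightarrow> 'a::finite) \<Rightarrow> 'a"
  assumes "finite S" and "0 \<in> S" and "card S \<ge> 2"
    and ignores: "\<And>z a. z \<in> patterns S \<Longrightarrow> mu (z(0 := a)) = mu z"
  shows "card (UNIV :: 'a set) dvd card (active_patterns S mu)"
proof -
  let ?n = "card (UNIV :: 'a set)" and ?N = "{z \<in> patterns S. mu z = z 0}"
  have "finite (active_patterns S mu)" "finite ?N"
    using finite_patterns[OF \<open>finite S\<close>] by (auto simp: active_patterns_def)
  then have "card (active_patterns S mu \<union> ?N) = card (active_patterns S mu) + card ?N"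
    by (rule card_Un_disjoint) (auto simp: active_patterns_def)
  moreover have "active_patterns S mu \<union> ?N = patterns S"
    by (auto simp: active_patterns_def)
  moreover have "card ?N = ?n ^ (card S - 1)"
    using card_inactive_patterns[OF \<open>0 \<in> S\<close> ignores] assms(1,2)
    by (simp add: card_patterns)
  ultimately have "card (active_patterns S mu) = ?n ^ card S - ?n ^ (card S - 1)"
    using \<open>finite S\<close> by (simp add: card_patterns)
  moreover have "?n dvd ?n ^ card S" "?n dvd ?n ^ (card S - 1)"
    using \<open>card S \<ge> 2\<close> by simp_all
  ultimately show ?thesis
    by (simp add: dvd_diff_nat)
qed

lemma subset_memory_set:
  fixes mu :: "('g::group_add \<Rightarrow> 'a::finite) \<Rightarrow> 'a"
  assumes "finite S" and "0 \<in> S" and "card S \<ge> 2"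
    and "\<not> card (UNIV :: 'a set) dvd card (active_patterns S mu)"
    and T: "memory_set (ca S mu) T"
  shows "S \<subseteq> T"
proof
  fix s
  assume "s \<in> S"
  show "s \<in> T"
  proof (rule ccontr)
    assume "s \<notin> T"
    then have "\<And>z a. z \<in> patterns S \<Longrightarrow> mu (z(s := a)) = mu z"
      using memory_set_local_map_fun_upd[OF T \<open>s \<in> S\<close>] by blast
    then have "card (UNIV :: 'a set) dvd card (active_patterns S mu)"
      using card_UNIV_dvd_card_active_patterns_nonzero[OF assms(1) \<open>s \<in> S\<close>]
        card_UNIV_dvd_card_active_patterns_zero[OF assms(1-3)]
      by (cases "s = 0") auto
    then show False
      using assms(4) by contradiction
  qed
qed

theorem mainTheorem9:
  fixes S :: "'g::group_add set"
    and P :: "('g \<Rightarrow> 'a::finite) set"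
    and f mu :: "('g \<Rightarrow> 'a) \<Rightarrow> 'a"
  assumes "card (UNIV :: 'a set) \<ge> 2"
    and "finite S" and "0 \<in> S" and "card S \<ge> 2"
    and "generates S P f mu"
    and "\<not> card (UNIV :: 'a set) dvd card P"
  shows "mms S mu = S"
proof
  have "memory_set (ca S mu) S"
    using assms(2) by (auto simp: memory_set_def)
  then show "mms S mu \<subseteq> S"
    unfolding mms_def by blast
  have "\<not> card (UNIV :: 'a set) dvd card (active_patterns S mu)"
    using assms(5,6) generates_imp_eq_active_patterns by blast
  then show "S \<subseteq> mms S mu"
    unfolding mms_def using subset_memory_set assms(2-4) by blast
qed

end
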